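(* Let $a,b,c,q>0$, $0<p<1$, and consider $$\frac{dx}{dt}=x\left[\frac{(1-x)(x-p)}{1+qy}-ay\right],\qquad \frac{dy}{dt}=by\,(1-y-cx).$$ With $A_1=ac^2q+1$, $A_2=-(2acq+ac+p+1)$, $A_3=a+aq+p$, $\Delta=A_2^2-4A_1A_3$, and $E_{1*}=(x_1,1-cx_1)$, $E_{2*}=(x_2,1-cx_2)$ (for $\Delta>0$, $x_{1,2}=\frac{-A_2\mp\sqrt\Delta}{2A_1}$), $E_{3*}=(x_3,1-cx_3)$ (for $\Delta=0$, $x_3=-\frac{A_2}{2A_1}$): whenever these points are positive equilibria of the system, 1. $E_{1*}$ is a saddle; 2. $E_{2*}$ is a stable node; 3. $E_{3*}$ is a saddle-node.
   Context: Positive equilibrium means an equilibrium with both coordinates strictly positive. The conditions under which $E_{1*},E_{2*},E_{3*}$ are positive equilibria are those of the existence classification: e.g. for $\Delta>0$, $2A_1+A_2>0$, $0<c<1$ both $E_{1*},E_{2*}$ are positive; for $\Delta=0$, $2A_1+A_2>0$, $0<c<1$, $E_{3*}$ is positive. *)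

theory Defs
  imports "HOL-Analysis.Analysis"
begin

text \<open>A planar autonomous system  x' = P x y,  y' = Q x y  with smooth right-hand sides.
  Partial derivatives are taken with the library's one-variable derivative operator deriv.\<close>

definition pdx :: "(real \<Rightarrow> real \<Rightarrow> real) \<Rightarrow> real \<Rightarrow> real \<Rightarrow> real" where
  "pdx F x y = deriv (\<lambda>t. F t y) x"

definition pdy :: "(real \<Rightarrow> real \<Rightarrow> real) \<Rightarrow> real \<Rightarrow> real \<Rightarrow> real" where
  "pdy F x y = deriv (\<lambda>t. F x t) y"

definition is_equilibrium :: "(real \<Rightarrow> real \<Rightarrow> real) \<Rightarrow> (real \<Rightarrow> real \<Rightarrow> real) \<Rightarrow> real \<Rightarrow> real \<Rightarrow> bool" where
  "is_equilibrium P Q x y \<longleftrightarrow> P x y = 0 \<and> Q x y = 0"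

definition positive_equilibrium :: "(real \<Rightarrow> real \<Rightarrow> real) \<Rightarrow> (real \<Rightarrow> real \<Rightarrow> real) \<Rightarrow> real \<Rightarrow> real \<Rightarrow> bool" where
  "positive_equilibrium P Q x y \<longleftrightarrow> is_equilibrium P Q x y \<and> x > 0 \<and> y > 0"

definition jac_tr :: "(real \<Rightarrow> real \<Rightarrow> real) \<Rightarrow> (real \<Rightarrow> real \<Rightarrow> real) \<Rightarrow> real \<Rightarrow> real \<Rightarrow> real" where
  "jac_tr P Q x y = pdx P x y + pdy Q x y"

definition jac_det :: "(real \<Rightarrow> real \<Rightarrow> real) \<Rightarrow> (real \<Rightarrow> real \<Rightarrow> real) \<Rightarrow> real \<Rightarrow> real \<Rightarrow> real" where
  "jac_det P Q x y = pdx P x y * pdy Q x y - pdy P x y * pdx Q x y"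

definition is_saddle :: "(real \<Rightarrow> real \<Rightarrow> real) \<Rightarrow> (real \<Rightarrow> real \<Rightarrow> real) \<Rightarrow> real \<Rightarrow> real \<Rightarrow> bool" where
  "is_saddle P Q x y \<longleftrightarrow> is_equilibrium P Q x y \<and>
     (\<exists>l1 l2::real. l1 < 0 \<and> 0 < l2 \<and> l1 + l2 = jac_tr P Q x y \<and> l1 * l2 = jac_det P Q x y)"

definition is_stable_node :: "(real \<Rightarrow> real \<Rightarrow> real) \<Rightarrow> (real \<Rightarrow> real \<Rightarrow> real) \<Rightarrow> real \<Rightarrow> real \<Rightarrow> bool" where
  "is_stable_node P Q x y \<longleftrightarrow> is_equilibrium P Q x y \<and>
     (\<exists>l1 l2::real. l1 < 0 \<and> l2 < 0 \<and> l1 + l2 = jac_tr P Q x y \<and> l1 * l2 = jac_det P Q x y)"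

text \<open>Saddle-node (fold) equilibrium: the Jacobian J has a simple zero eigenvalue
  (det J = 0, tr J \<noteq> 0) and the quadratic coefficient of the centre-manifold reduced
  equation, w \<cdot> D^2 F(v,v) with J v = 0, w^T J = 0, v,w \<noteq> 0, is nonzero.\<close>

definition hess_form :: "(real \<Rightarrow> real \<Rightarrow> real) \<Rightarrow> real \<Rightarrow> real \<Rightarrow> real \<Rightarrow> real \<Rightarrow> real" where
  "hess_form F x y v1 v2 =
     v1^2 * pdx (pdx F) x y + 2 * v1 * v2 * pdy (pdx F) x y + v2^2 * pdy (pdy F) x y"

definition is_saddle_node :: "(real \<Rightarrow> real \<Rightarrow> real) \<Rightarrow> (real \<Rightarrow> real \<Rightarrow> real) \<Rightarrow> real \<Rightarrow> real \<Rightarrow> bool" where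
  "is_saddle_node P Q x y \<longleftrightarrow> is_equilibrium P Q x y \<and>
     jac_det P Q x y = 0 \<and> jac_tr P Q x y \<noteq> 0 \<and>
     (\<exists>v1 v2 w1 w2::real. (v1, v2) \<noteq> (0, 0) \<and> (w1, w2) \<noteq> (0, 0) \<and>
        pdx P x y * v1 + pdy P x y * v2 = 0 \<and> pdx Q x y * v1 + pdy Q x y * v2 = 0 \<and>
        w1 * pdx P x y + w2 * pdx Q x y = 0 \<and> w1 * pdy P x y + w2 * pdy Q x y = 0 \<and>
        w1 * hess_form P x y v1 v2 + w2 * hess_form Q x y v1 v2 \<noteq> 0)"

definition fP :: "real \<Rightarrow> real \<Rightarrow> real \<Rightarrow> real \<Rightarrow> real \<Rightarrow> real" where
  "fP a p q x y = x * ((1 - x) * (x - p) / (1 + q * y) - a * y)"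

definition fQ :: "real \<Rightarrow> real \<Rightarrow> real \<Rightarrow> real \<Rightarrow> real" where
  "fQ b c x y = b * y * (1 - y - c * x)"

definition A1 :: "real \<Rightarrow> real \<Rightarrow> real \<Rightarrow> real" where
  "A1 a c q = a * c^2 * q + 1"

definition A2 :: "real \<Rightarrow> real \<Rightarrow> real \<Rightarrow> real \<Rightarrow> real" where
  "A2 a c p q = - (2 * a * c * q + a * c + p + 1)"

definition A3 :: "real \<Rightarrow> real \<Rightarrow> real \<Rightarrow> real" where
  "A3 a p q = a + a * q + p"

definition Disc :: "real \<Rightarrow> real \<Rightarrow> real \<Rightarrow> real \<Rightarrow> real" where
  "Disc a c p q = (A2 a c p q)^2 - 4 * A1 a c q * A3 a p q"

end

theory Submission
  imports Defs
begin

text \<open>Positive equilibria lie on the predator nullcline y = 1 - c x, where P = 0 becomes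
  (1 - x)(x - p) = a y (1 + q y), i.e. A1 x^2 + A2 x + A3 = 0.  At such a point the Jacobian has
  det J = b x y r / (1 + q y) and tr J = - x (r + E) / (1 + q y) - b y with E = c a (2 q y + 1) > 0,
  where r = 2 A1 x + A2 is the derivative of that quadratic.  At the smaller root r = - sqrt Disc,
  so det J < 0 (saddle); at the larger root r = sqrt Disc, so det J > 0, tr J < 0, and
  tr^2 - 4 det J \<ge> (x (r + E)/(1 + q y) - b y)^2 \<ge> 0 (stable node).  At the double root r = 0:
  det J = 0 \<noteq> tr J, the kernel of J is spanned by (1, -c), and the quadratic term of the reduced
  equation is - 2 b x y A1 / (1 + q y) \<noteq> 0 (saddle-node).\<close>

lemma opposite_sign_roots:
  fixes t d :: real
  assumes "d < 0"
  shows "\<exists>l1 l2. l1 < 0 \<and> 0 < l2 \<and> l1 + l2 = t \<and> l1 * l2 = d"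
proof -
  define r where "r = sqrt (t^2 - 4*d)"
  have "0 \<le> t^2 - 4*d" using assms zero_le_power2[of t] by linarith
  then have r2: "r^2 = t^2 - 4*d" unfolding r_def by simp
  have "sqrt (t^2) < r" unfolding r_def using assms by (intro real_sqrt_less_mono) simp
  then have "\<bar>t\<bar> < r" by simp
  with r2 show ?thesis
    by (intro exI[of _ "(t - r)/2"] exI[of _ "(t + r)/2"]) (auto simp: field_simps power2_eq_square)
qed

lemma negative_roots:
  fixes t d :: real
  assumes "t < 0" "0 < d" "4*d \<le> t^2"
  shows "\<exists>l1 l2. l1 < 0 \<and> l2 < 0 \<and> l1 + l2 = t \<and> l1 * l2 = d"
proof -
  define r where "r = sqrt (t^2 - 4*d)"
  have r2: "r^2 = t^2 - 4*d" and "0 \<le> r" unfolding r_def using assms by simp_all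
  moreover have "r < sqrt (t^2)" unfolding r_def using assms by (intro real_sqrt_less_mono) simp
  then have "r < -t" using assms by simp
  ultimately show ?thesis
    by (intro exI[of _ "(t - r)/2"] exI[of _ "(t + r)/2"]) (auto simp: field_simps power2_eq_square)
qed

lemma negative_roots_of_dominated_product:
  fixes R S V :: real
  assumes "0 < R" "R \<le> S" "0 < V"
  shows "\<exists>l1 l2. l1 < 0 \<and> l2 < 0 \<and> l1 + l2 = - S - V \<and> l1 * l2 = V * R"
proof (rule negative_roots)
  have "4*(V*R) \<le> 4*(V*S)" using assms by simp
  also have "\<dots> = (- S - V)^2 - (S - V)^2" by (simp add: power2_eq_square algebra_simps)
  also have "\<dots> \<le> (- S - V)^2" by simp
  finally show "4*(V*R) \<le> (- S - V)^2" .
qed (use assms in auto)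

lemma pdx_fP: "pdx (fP a p q) x y = ((1-x)*(x-p) + x*(1+p-2*x))/(1+q*y) - a*y"
proof -
  define D where "D = 1+q*y"
  have "((\<lambda>t. t*((1-t)*(t-p)/D - a*y)) has_field_derivative
      ((1-x)*(x-p) + x*(1+p-2*x))/D - a*y) (at x)"
    by (rule DERIV_cdivide derivative_eq_intros refl | simp)+
       (simp add: algebra_simps add_divide_distrib diff_divide_distrib)
  then show ?thesis unfolding pdx_def fP_def D_def[symmetric] by (rule DERIV_imp_deriv)
qed

lemma pdy_fP: "1+q*y \<noteq> 0 \<Longrightarrow> pdy (fP a p q) x y = x*(-(q*((1-x)*(x-p)))/(1+q*y)^2 - a)"
  unfolding pdy_def fP_def
  by (rule DERIV_imp_deriv) (auto intro!: derivative_eq_intros simp: field_simps power2_eq_square)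

lemma pdx_pdx_fP: "pdx (pdx (fP a p q)) x y = (2+2*p-6*x)/(1+q*y)"
proof -
  define D where "D = 1+q*y"
  have "((\<lambda>t. ((1-t)*(t-p) + t*(1+p-2*t))/D - a*y) has_field_derivative (2+2*p-6*x)/D) (at x)"
    by (rule DERIV_cdivide derivative_eq_intros refl | simp)+
  then show ?thesis unfolding pdx_def[of "pdx _"] pdx_fP D_def[symmetric] by (rule DERIV_imp_deriv)
qed

lemma pdy_pdx_fP:
  "1+q*y \<noteq> 0 \<Longrightarrow> pdy (pdx (fP a p q)) x y = -(q*((1-x)*(x-p) + x*(1+p-2*x)))/(1+q*y)^2 - a"
  unfolding pdy_def[of "pdx _"] pdx_fP
  by (rule DERIV_imp_deriv) (auto intro!: derivative_eq_intros simp: field_simps power2_eq_square)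

lemma pdy_pdy_fP:
  assumes "0 < 1+q*y" shows "pdy (pdy (fP a p q)) x y = 2*x*q^2*((1-x)*(x-p))/(1+q*y)^3"
proof -
  have "\<forall>\<^sub>F u in nhds y. u \<in> {u. 0 < 1+q*u}"
    using assms by (intro eventually_nhds_in_open open_Collect_less continuous_intros) auto
  then have "\<forall>\<^sub>F u in nhds y. pdy (fP a p q) x u = x*(-(q*((1-x)*(x-p)))/(1+q*u)^2 - a)"
    by eventually_elim (simp add: pdy_fP)
  then have "pdy (pdy (fP a p q)) x y = deriv (\<lambda>u. x*(-(q*((1-x)*(x-p)))/(1+q*u)^2 - a)) y"
    unfolding pdy_def[of "pdy _"] by (rule deriv_cong_ev[OF _ refl])
  also have "\<dots> = 2*x*q*(q*((1-x)*(x-p)))/(1+q*y)^3"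
  proof (rule DERIV_imp_deriv)
    have "K*(2*(q*D))*x/D^4 = 2*x*q*K/D^3" if "D \<noteq> 0" for K D :: real
      using that by (simp add: eval_nat_numeral field_simps)
    with assms show "((\<lambda>u. x*(-(q*((1-x)*(x-p)))/(1+q*u)^2 - a)) has_real_derivative
        2*x*q*(q*((1-x)*(x-p)))/(1+q*y)^3) (at y)"
      by (auto intro!: derivative_eq_intros)
  qed
  finally show ?thesis by (simp add: power2_eq_square)
qed

lemma pdx_fQ: "pdx (fQ b c) x y = -b*c*y"
  unfolding pdx_def fQ_def
  by (rule DERIV_imp_deriv) (auto intro!: derivative_eq_intros simp: field_simps)

lemma pdy_fQ: "pdy (fQ b c) x y = b*(1-y-c*x) - b*y"
  unfolding pdy_def fQ_def
  by (rule DERIV_imp_deriv) (auto intro!: derivative_eq_intros simp: field_simps)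

lemma hess_form_fQ: "hess_form (fQ b c) x y v1 v2 = -2 * b * v2 * (c * v1 + v2)"
proof -
  have "pdx (pdx (fQ b c)) x y = 0"
    unfolding pdx_def[of "pdx _"] pdx_fQ by simp
  moreover have "pdy (pdx (fQ b c)) x y = -b*c"
    unfolding pdy_def[of "pdx _"] pdx_fQ
    by (rule DERIV_imp_deriv) (auto intro!: derivative_eq_intros)
  moreover have "pdy (pdy (fQ b c)) x y = -2*b"
    unfolding pdy_def[of "pdy _"] pdy_fQ
    by (rule DERIV_imp_deriv) (auto intro!: derivative_eq_intros)
  ultimately show ?thesis
    unfolding hess_form_def by (simp add: algebra_simps power2_eq_square)
qed

lemma fP_eq_zero_iff:
  assumes "0 < x" "0 < 1 + q*y"
  shows "fP a p q x y = 0 \<longleftrightarrow> (1-x)*(x-p) = a*y*(1+q*y)"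
proof -
  have "fP a p q x y = x * (((1-x)*(x-p) - a*y*(1+q*y)) / (1+q*y))"
    using assms unfolding fP_def by (simp add: field_simps)
  with assms show ?thesis by simp
qed

lemma pdx_fP_at_zero:
  assumes "0 < x" "0 < 1 + q*y" "fP a p q x y = 0"
  shows "pdx (fP a p q) x y = x*(1+p-2*x)/(1+q*y)"
  using assms by (simp add: pdx_fP fP_eq_zero_iff field_simps)

lemma pdy_fP_at_zero:
  assumes "0 < x" "0 < 1 + q*y" "fP a p q x y = 0"
  shows "pdy (fP a p q) x y = -x*a*(2*q*y+1)/(1+q*y)"
proof -
  have "x*(-(q*(a*y*D))/D^2 - a) = -x*a*(q*y + D)/D" if "D \<noteq> 0" for D
    using that by (simp add: power2_eq_square field_simps)
  from this[of "1+q*y"] assms show ?thesis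
    by (simp add: pdy_fP fP_eq_zero_iff algebra_simps)
qed

lemma hess_form_fP_at_double_root:
  fixes a c p q x :: real
  defines "y \<equiv> 1 - c*x"
  assumes "0 < q" "0 < x" "0 < y" "fP a p q x y = 0" "2*A1 a c q*x + A2 a c p q = 0"
  shows "hess_form (fP a p q) x y 1 (-c) = -2*x*A1 a c q/(1+q*y)"
proof -
  define D where "D = 1 + q*y"
  have D: "0 < D" using assms(2,4) by (simp add: D_def add_pos_pos)
  have M: "(1-x)*(x-p) = a*y*D" using assms(3,5) D by (simp add: fP_eq_zero_iff D_def)
  have p: "p = 2*x - 1 - c*a*(2*q*y+1)"
    using assms(6) unfolding A1_def A2_def y_def by (simp add: algebra_simps power2_eq_square)
  have "hess_form (fP a p q) x y 1 (-c) =
      (2+2*p-6*x)/D - 2*c*(-(q*(a*y*D + x*(1+p-2*x)))/D^2 - a) + c^2*(2*x*q^2*(a*y*D)/D^3)"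
    using D M unfolding hess_form_def D_def by (simp add: pdx_pdx_fP pdy_pdx_fP pdy_pdy_fP)
  also have "\<dots> = -2*x*A1 a c q/D"
    using D unfolding p
    by (simp add: field_simps eval_nat_numeral) (simp add: A1_def D_def algebra_simps power2_eq_square)
  finally show ?thesis unfolding D_def .
qed

lemma nullcline_quadratic_slope:
  "1+p-2*x + c*a*(2*q*(1-c*x)+1) = -(2*A1 a c q*x + A2 a c p q)"
  unfolding A1_def A2_def by (simp add: algebra_simps power2_eq_square)

lemma jacobian_entries_on_predator_nullcline:
  fixes a b c p q x :: real
  defines "y \<equiv> 1 - c*x" and "r \<equiv> 2*A1 a c q*x + A2 a c p q"
  assumes "0 < q" "0 < x" "0 < y" "fP a p q x y = 0"
  shows "pdx (fP a p q) x y = -x*(r + c*a*(2*q*y+1))/(1+q*y)"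
    and "pdy (fP a p q) x y = -x*a*(2*q*y+1)/(1+q*y)"
    and "pdy (fQ b c) x y = -b*y"
proof -
  have D: "0 < 1+q*y" using assms(3,5) by (simp add: add_pos_pos)
  have slope: "1+p-2*x = -(r + c*a*(2*q*y+1))"
    using nullcline_quadratic_slope[of p x c a q] unfolding r_def y_def by linarith
  show "pdx (fP a p q) x y = -x*(r + c*a*(2*q*y+1))/(1+q*y)"
    unfolding pdx_fP_at_zero[OF assms(4) D assms(6)] slope
    by (simp only: mult_minus_left mult_minus_right)
  show "pdy (fP a p q) x y = -x*a*(2*q*y+1)/(1+q*y)"
    using pdy_fP_at_zero[of x q y a p] D assms(4,6) by simp
  show "pdy (fQ b c) x y = -b*y" unfolding pdy_fQ y_def by (simp add: algebra_simps)
qed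

lemma jacobian_on_predator_nullcline:
  fixes a b c p q x :: real
  defines "y \<equiv> 1 - c*x" and "r \<equiv> 2*A1 a c q*x + A2 a c p q"
  assumes "0 < q" "0 < x" "0 < y" "fP a p q x y = 0"
  shows "jac_det (fP a p q) (fQ b c) x y = b*x*y*r/(1+q*y)"
    and "jac_tr (fP a p q) (fQ b c) x y = -x*(r + c*a*(2*q*y+1))/(1+q*y) - b*y"
proof -
  define D where "D = 1+q*y"
  have "0 < D" using assms(3,5) by (simp add: D_def add_pos_pos)
  note entries =
    jacobian_entries_on_predator_nullcline[OF assms(3-6)[unfolded y_def], folded y_def r_def]
  show "jac_det (fP a p q) (fQ b c) x y = b*x*y*r/(1+q*y)"
    and "jac_tr (fP a p q) (fQ b c) x y = -x*(r + c*a*(2*q*y+1))/(1+q*y) - b*y"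
    unfolding jac_det_def jac_tr_def entries pdx_fQ D_def[symmetric] using \<open>0 < D\<close>
    by (simp_all add: field_simps)
qed

lemma is_saddle_if_neg_slope:
  assumes "0 < b" "0 < q" "positive_equilibrium (fP a p q) (fQ b c) x (1-c*x)"
    and "2*A1 a c q*x + A2 a c p q < 0"
  shows "is_saddle (fP a p q) (fQ b c) x (1-c*x)"
proof -
  from assms(3) have x: "0 < x" and y: "0 < 1-c*x" and eq: "fP a p q x (1-c*x) = 0"
    unfolding positive_equilibrium_def is_equilibrium_def by auto
  have "0 < b*x*(1-c*x)" "0 < 1+q*(1-c*x)" using assms(1,2) x y by (simp_all add: add_pos_pos)
  with assms(4) have "jac_det (fP a p q) (fQ b c) x (1-c*x) < 0"
    unfolding jacobian_on_predator_nullcline(1)[OF assms(2) x y eq]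
    by (simp add: divide_neg_pos mult_pos_neg)
  with assms(3) show ?thesis
    unfolding is_saddle_def positive_equilibrium_def using opposite_sign_roots by blast
qed

lemma is_stable_node_if_pos_slope:
  assumes "0 < a" "0 < b" "0 < c" "0 < q" "positive_equilibrium (fP a p q) (fQ b c) x (1-c*x)"
    and "0 < 2*A1 a c q*x + A2 a c p q"
  shows "is_stable_node (fP a p q) (fQ b c) x (1-c*x)"
proof -
  define y r where "y = 1-c*x" and "r = 2*A1 a c q*x + A2 a c p q"
  from assms(5) have x: "0 < x" and y: "0 < y" and eq: "fP a p q x y = 0"
    unfolding positive_equilibrium_def is_equilibrium_def y_def by auto
  have D: "0 < 1+q*y" using assms(4) y by (simp add: add_pos_pos)
  have E: "0 < c*a*(2*q*y+1)" using assms(1,3,4) y by (simp add: add_pos_pos)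
  define R S V where "R = x*r/(1+q*y)" and "S = x*(r + c*a*(2*q*y+1))/(1+q*y)" and "V = b*y"
  have "0 < R" "R \<le> S" "0 < V"
    using assms(2,6) x y D E unfolding R_def S_def V_def r_def by (simp_all add: divide_right_mono)
  moreover have "jac_det (fP a p q) (fQ b c) x y = V*R" "jac_tr (fP a p q) (fQ b c) x y = -S - V"
    using jacobian_on_predator_nullcline[OF assms(4) x y[unfolded y_def] eq[unfolded y_def]]
    unfolding R_def S_def V_def r_def y_def by simp_all
  ultimately show ?thesis
    using assms(5) negative_roots_of_dominated_product[of R S V]
    unfolding is_stable_node_def positive_equilibrium_def y_def by auto
qed

lemma is_saddle_node_if_zero_slope:
  assumes "0 < a" "0 < b" "0 < c" "0 < q" "positive_equilibrium (fP a p q) (fQ b c) x (1-c*x)"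
    and "2*A1 a c q*x + A2 a c p q = 0"
  shows "is_saddle_node (fP a p q) (fQ b c) x (1-c*x)"
proof -
  define y where "y = 1-c*x"
  from assms(5) have x: "0 < x" and y: "0 < y" and eq: "fP a p q x y = 0"
    unfolding positive_equilibrium_def is_equilibrium_def y_def by auto
  define D where "D = 1+q*y"
  have "0 < D" "0 < c*a*(2*q*y+1)" "0 < A1 a c q"
    using assms(1,3,4) y unfolding D_def A1_def by (simp_all add: add_pos_pos)
  note facts = assms(4) x y[unfolded y_def] eq[unfolded y_def]
  note J = jacobian_on_predator_nullcline[OF facts, folded y_def D_def, unfolded assms(6)]
  note entries =
    jacobian_entries_on_predator_nullcline[OF facts, folded y_def D_def, unfolded assms(6)]
  define Px Py where "Px = pdx (fP a p q) x y" and "Py = pdy (fP a p q) x y"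
  have Px: "Px = c * Py" unfolding Px_def Py_def entries by (simp add: algebra_simps)
  have hess: "b*y * hess_form (fP a p q) x y 1 (-c) + Py * hess_form (fQ b c) x y 1 (-c) \<noteq> 0"
    using hess_form_fP_at_double_root[OF facts assms(6), folded y_def D_def]
      \<open>0 < D\<close> \<open>0 < A1 a c q\<close> x y assms(2)
    by (simp add: hess_form_fQ)
  have "0 < x * (c*a*(2*q*y+1)) / D" using x \<open>0 < D\<close> \<open>0 < c*a*(2*q*y+1)\<close> by simp
  moreover have "0 < b*y" using assms(2) y by simp
  ultimately have "jac_tr (fP a p q) (fQ b c) x y < 0" unfolding J by simp
  with assms(5) J(1) hess Px y assms(2) show ?thesis
    unfolding is_saddle_node_def y_def[symmetric] Px_def[symmetric] Py_def[symmetric]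
    by (intro conjI exI[of _ 1] exI[of _ "-c"] exI[of _ "b*y"] exI[of _ Py])
       (simp_all add: positive_equilibrium_def entries(3) pdx_fQ)
qed

theorem theorem4p3:
  fixes a b c p q :: real
  assumes "a > 0" and "b > 0" and "c > 0" and "q > 0" and "0 < p" and "p < 1"
  defines "P \<equiv> fP a p q" and "Q \<equiv> fQ b c"
      and "x1 \<equiv> (- A2 a c p q - sqrt (Disc a c p q)) / (2 * A1 a c q)"
      and "x2 \<equiv> (- A2 a c p q + sqrt (Disc a c p q)) / (2 * A1 a c q)"
      and "x3 \<equiv> - A2 a c p q / (2 * A1 a c q)"
  shows "(Disc a c p q > 0 \<and> positive_equilibrium P Q x1 (1 - c * x1) \<longrightarrow>
            is_saddle P Q x1 (1 - c * x1))
       \<and> (Disc a c p q > 0 \<and> positive_equilibrium P Q x2 (1 - c * x2) \<longrightarrow>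
            is_stable_node P Q x2 (1 - c * x2))
       \<and> (Disc a c p q = 0 \<and> positive_equilibrium P Q x3 (1 - c * x3) \<longrightarrow>
            is_saddle_node P Q x3 (1 - c * x3))"
proof -
  have "0 < A1 a c q" unfolding A1_def using assms(1,3,4) by (simp add: add_pos_pos)
  then have "2*A1 a c q*x1 + A2 a c p q = - sqrt (Disc a c p q)"
    and "2*A1 a c q*x2 + A2 a c p q = sqrt (Disc a c p q)"
    and "2*A1 a c q*x3 + A2 a c p q = 0"
    unfolding x1_def x2_def x3_def by (simp_all add: field_simps)
  then show ?thesis
    unfolding P_def Q_def
    using is_saddle_if_neg_slope[OF assms(2,4)] is_stable_node_if_pos_slope[OF assms(1-4)]
      is_saddle_node_if_zero_slope[OF assms(1-4)]
    by auto
qed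

end
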